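(* Let $X\ge0$ be a random variable. If $$\liminf_{x\to\infty}\frac{R_X(x)}{\sqrt{x}}\in(0,\infty],$$ then $X$ is determined by its moments (in the Stieltjes sense). Moreover, if $X$ is heavy-tailed and some natural scale $h_X$ of $X$ satisfies $\liminf_{x\to\infty} h_X(x)/\sqrt{x}\in(0,\infty]$, then $\liminf_{x\to\infty}R_X(x)/\sqrt x\in(0,\infty]$, and hence $X$ is determined by its moments.
   Context: $R_X(x):=-\log P(X>x)$. $X$ is heavy-tailed if $E(e^{sX})=\infty$ for all $s>0$. A natural scale of a heavy-tailed $X$ is a concave $h:[0,\infty)\to[0,\infty)$ with $h(0)=0$, $h(x)\to\infty$, and $\liminf_{x\to\infty}R_X(x)/h(x)=1$. A non-negative $X$ with all moments finite is determined by its moments if every non-negative random variable $Y$ with $E(Y^k)=E(X^k)$ for all $k\in\mathbb{N}$ has the same law as $X$. *)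

theory Defs
  imports "HOL-Probability.Probability"
begin

definition tail_R :: "'a measure \<Rightarrow> ('a \<Rightarrow> real) \<Rightarrow> real \<Rightarrow> ereal" where
  "tail_R M X x =
     (let p = measure M {\<omega> \<in> space M. X \<omega> > x}
      in if p = 0 then \<infinity> else ereal (- ln p))"

definition heavy_tailed :: "'a measure \<Rightarrow> ('a \<Rightarrow> real) \<Rightarrow> bool" where
  "heavy_tailed M X \<longleftrightarrow>
     (\<forall>s::real. s > 0 \<longrightarrow> (\<integral>\<^sup>+ \<omega>. ennreal (exp (s * X \<omega>)) \<partial>M) = \<infinity>)"

definition natural_scale :: "'a measure \<Rightarrow> ('a \<Rightarrow> real) \<Rightarrow> (real \<Rightarrow> real) \<Rightarrow> bool" where
  "natural_scale M X h \<longleftrightarrow>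
     concave_on {0..} h \<and> (\<forall>x\<ge>0. h x \<ge> 0) \<and> h 0 = 0 \<and>
     filterlim h at_top at_top \<and>
     Liminf at_top (\<lambda>x. tail_R M X x / ereal (h x)) = 1"

text \<open>Laws are measures on the real
  line, so it suffices to let Y range over random variables on probability spaces whose
  sample space is the real line (any law is realised there by the identity).\<close>
definition moment_determinate :: "'a measure \<Rightarrow> ('a \<Rightarrow> real) \<Rightarrow> bool" where
  "moment_determinate M X \<longleftrightarrow>
     (\<forall>k::nat. integrable M (\<lambda>\<omega>. X \<omega> ^ k)) \<and>
     (\<forall>(N :: real measure) (Y :: real \<Rightarrow> real).
        prob_space N \<longrightarrow> Y \<in> borel_measurable N \<longrightarrow> (AE \<omega> in N. Y \<omega> \<ge> 0) \<longrightarrow>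
        (\<forall>k::nat. integrable N (\<lambda>\<omega>. Y \<omega> ^ k) \<and>
                  (\<integral>\<omega>. Y \<omega> ^ k \<partial>N) = (\<integral>\<omega>. X \<omega> ^ k \<partial>M)) \<longrightarrow>
        distr N borel Y = distr M borel X)"

end

theory Submission
  imports Defs
begin

text \<open>
  A tail condition  \<open>P(X > x) \<le> exp (-c \<surd>x)\<close>  for large x implies the
  exponential moment  \<open>E exp (t \<surd>X) < \<infinity>\<close>  with  t = c/2  (summation over the integer
  parts of X). Such an exponential moment makes X moment-determinate: let \<open>\<plusminus>\<surd>X\<close> be the
  symmetrisation of \<open>\<surd>X\<close> by an independent fair sign. Its characteristic function is
  \<open>E cos (v \<surd>X)\<close>; the even derivatives of that function at 0 are, up to sign, the
  moments of X and the odd ones vanish. The exponential moment yields uniform Taylor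
  remainder bounds on every interval of radius t/4, so the characteristic function (together
  with all its derivatives) is determined by the moments, step by step along the real line.
  A random variable Y \<ge> 0 with the same moments inherits the exponential moment (compare
  the power series of \<open>cosh (t \<surd>\<cdot>)\<close>), so both symmetrisations have the same
  characteristic function, hence the same law (Levy's uniqueness theorem), and squaring
  recovers the laws of X and Y. Finally, both hypotheses of the theorem (positive liminf of
  \<open>R_X(x)/\<surd>x\<close>, or of \<open>h(x)/\<surd>x\<close> for a natural scale h) give such a tail bound.
\<close>

lemma power_div_fact_le_exp:
  assumes "(x::real) \<ge> 0" shows "x ^ n / fact n \<le> exp x"
proof -
  have s: "(\<lambda>n. x^n /\<^sub>R fact n) sums exp x" by (rule exp_converges)
  have "(\<Sum>i\<in>{n}. x^i /\<^sub>R fact i) \<le> exp x"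
    by (rule sum_le_suminf[OF sums_summable[OF s], of "{n}", unfolded sums_unique[OF s, symmetric]])
      (use assms in auto)
  then show ?thesis by (simp add: divide_inverse mult.commute)
qed

lemma power_le_exp_scaled:
  assumes "(z::real) \<ge> 0" "t > 0" shows "z ^ m \<le> fact m / t ^ m * exp (t * z)"
proof -
  have "(t*z)^m / fact m \<le> exp (t*z)" using assms by (intro power_div_fact_le_exp) auto
  then have "t^m * z^m \<le> fact m * exp (t*z)"
    by (simp add: power_mult_distrib divide_le_eq mult.commute)
  then show ?thesis using assms by (simp add: divide_simps mult.commute)
qed

lemma fact_add_le: "fact (k + m) \<le> (fact k * fact m * 2 ^ (k + m) :: real)"
proof -
  have "fact k * fact m * ((k+m) choose k) = (fact (k+m) :: nat)"
    using binomial_fact_lemma[of k "k+m"] by simp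
  then have e: "fact k * fact m * real ((k+m) choose k) = fact (k+m)"
    by (metis of_nat_fact of_nat_mult)
  have "real ((k+m) choose k) \<le> 2^(k+m)"
    using binomial_le_pow2[of "k+m" k] by (simp add: of_nat_le_iff flip: of_nat_power)
  then show ?thesis unfolding e[symmetric]
    by (intro mult_left_mono) auto
qed

text \<open>The coefficient of the m-th Taylor remainder on a step of size at most t/4
  decays geometrically in m; this is what makes the local expansions converge.\<close>
lemma taylor_coefficient_bound:
  assumes "(t::real) > 0" "\<bar>u\<bar> \<le> t/4"
  shows "\<bar>u\<bar>^m / fact m * (fact (k+m) / t^(k+m)) \<le> fact k * (2/t)^k * (1/2)^m"
proof -
  have a: "\<bar>u\<bar>^m \<le> (t/4)^m" using assms by (intro power_mono) auto
  have "\<bar>u\<bar>^m / fact m * (fact (k+m) / t^(k+m))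
      \<le> (t/4)^m / fact m * (fact k * fact m * 2 ^ (k + m) / t^(k+m))"
    using a fact_add_le[of k m] assms
    by (intro mult_mono divide_right_mono) (auto intro!: divide_nonneg_nonneg)
  also have "\<dots> = fact k * (2/t)^k * ((t/4)^m * 2^m / t^m)"
    using assms by (simp add: power_add power_divide field_simps)
  also have "(t/4)^m * 2^m / t^m = ((t/4) * 2 / t)^m"
    by (simp only: power_mult_distrib power_divide)
  also have "(t/4) * 2 / t = 1/2" using assms by simp
  finally show ?thesis .
qed

lemma le_zero_by_geometric:
  fixes a K :: real
  assumes "\<And>n. a \<le> K * (1/2)^Suc n"
  shows "a \<le> 0"
proof -
  have "(\<lambda>n. (1/2::real)^Suc n) \<longlonglongrightarrow> 0"
    by (rule LIMSEQ_Suc[OF LIMSEQ_power_zero]) simp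
  then have "(\<lambda>n. K * (1/2)^Suc n) \<longlonglongrightarrow> 0"
    by (rule tendsto_mult_right_zero)
  then show ?thesis by (rule LIMSEQ_le_const) (use assms in blast)
qed

lemma real_line_propagation:
  fixes s :: real
  assumes s: "s > 0" and zero: "Q 0"
    and step: "\<And>v u. Q v \<Longrightarrow> \<bar>u\<bar> \<le> s \<Longrightarrow> Q (v + u)"
  shows "Q v"
proof -
  have lattice: "Q (real m * s) \<and> Q (-(real m * s))" for m
  proof (induction m)
    case 0 then show ?case using zero by simp
  next
    case (Suc m)
    have "Q (real m * s + s)" using Suc s step[of "real m * s" s] by simp
    moreover have "Q (-(real m * s) + (-s))" using Suc s step[of "-(real m * s)" "-s"] by simp
    ultimately show ?case by (simp add: algebra_simps)
  qed
  define m where "m = nat \<lfloor>\<bar>v\<bar>/s\<rfloor>"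
  have "real m = of_int \<lfloor>\<bar>v\<bar>/s\<rfloor>" using s unfolding m_def by simp
  then have m1: "real m * s \<le> \<bar>v\<bar>" and m2: "\<bar>v\<bar> < real m * s + s"
    using floor_divide_lower[OF s, of "\<bar>v\<bar>"] floor_divide_upper[OF s, of "\<bar>v\<bar>"]
    by (simp_all add: algebra_simps)
  show ?thesis
  proof (cases "v \<ge> 0")
    case True
    then have "Q (real m * s + (v - real m * s))"
      using m1 m2 lattice by (intro step) auto
    then show ?thesis by simp
  next
    case False
    then have "Q (-(real m * s) + (v + real m * s))"
      using m1 m2 lattice by (intro step) auto
    then show ?thesis by simp
  qed
qed

section \<open>Symmetrisation of the square root\<close>

definition sqrt_symmetrisation :: "'a measure \<Rightarrow> ('a \<Rightarrow> real) \<Rightarrow> real measure" where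
  "sqrt_symmetrisation M X = distr (M \<Otimes>\<^sub>M measure_pmf (bernoulli_pmf (1/2))) borel
     (\<lambda>(\<omega>,b). if b then sqrt (X \<omega>) else - sqrt (X \<omega>))"

lemma sqrt_symmetrisation_props:
  assumes M: "prob_space M" and X[measurable]: "X \<in> borel_measurable M"
    and nn: "\<forall>\<omega>\<in>space M. X \<omega> \<ge> 0"
  shows "real_distribution (sqrt_symmetrisation M X)"
    "char (sqrt_symmetrisation M X) v
       = (\<integral>\<omega>. (iexp (v * sqrt (X \<omega>)) + iexp (-(v * sqrt (X \<omega>)))) / 2 \<partial>M)"
    "distr M borel X = distr (sqrt_symmetrisation M X) borel (\<lambda>z. z^2)"
proof -
  let ?B = "measure_pmf (bernoulli_pmf (1/2))"
  let ?P = "M \<Otimes>\<^sub>M ?B"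
  let ?f = "(\<lambda>(\<omega>,b). if b then sqrt (X \<omega>) else - sqrt (X \<omega>))"
  interpret P: prob_space ?P
    by (intro prob_space_pair M prob_space_measure_pmf)
  interpret pair_sigma_finite M ?B
    by (intro pair_sigma_finite.intro prob_space_imp_sigma_finite M prob_space_measure_pmf)
  have [measurable]: "?f \<in> borel_measurable ?P" by measurable
  show "real_distribution (sqrt_symmetrisation M X)"
    unfolding sqrt_symmetrisation_def by (rule P.real_distribution_distr) simp
  have "char (sqrt_symmetrisation M X) v = (\<integral>p. iexp (v * ?f p) \<partial>?P)"
    unfolding sqrt_symmetrisation_def char_def by (subst integral_distr) auto
  also have "\<dots> = (\<integral>\<omega>. (\<integral>b. iexp (v * ?f (\<omega>,b)) \<partial>?B) \<partial>M)"
    by (rule integral_fst'[symmetric]) (intro P.integrable_const_bound[where B=1], auto)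
  also have "\<dots> = (\<integral>\<omega>. (iexp (v * sqrt (X \<omega>)) + iexp (-(v * sqrt (X \<omega>)))) / 2 \<partial>M)"
    by (intro Bochner_Integration.integral_cong refl, subst integral_measure_pmf[of UNIV])
      (auto simp: UNIV_bool field_simps scaleR_conv_of_real)
  finally show "char (sqrt_symmetrisation M X) v
      = (\<integral>\<omega>. (iexp (v * sqrt (X \<omega>)) + iexp (-(v * sqrt (X \<omega>)))) / 2 \<partial>M)" .
  have "distr ?P M fst = M" by (rule prob_space.distr_pair_fst[OF prob_space_measure_pmf])
  then have "distr M borel X = distr (distr ?P M fst) borel X" by simp
  also have "\<dots> = distr ?P borel (\<lambda>p. X (fst p))"
    by (subst distr_distr) (auto simp: comp_def)
  also have "\<dots> = distr ?P borel (\<lambda>p. (?f p)^2)"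
    by (intro distr_cong) (auto simp: space_pair_measure nn)
  also have "\<dots> = distr (sqrt_symmetrisation M X) borel (\<lambda>z. z^2)"
    unfolding sqrt_symmetrisation_def by (subst distr_distr) (auto simp: comp_def)
  finally show "distr M borel X = distr (sqrt_symmetrisation M X) borel (\<lambda>z. z^2)" .
qed

text \<open>The k-th v-derivative of \<open>iexp (v z)\<close>, up to the factor \<open>\<i>^k\<close>.\<close>
definition twisted_power :: "nat \<Rightarrow> real \<Rightarrow> real \<Rightarrow> complex" where
  "twisted_power k v z = complex_of_real z ^ k * iexp (v * z)"

text \<open>Its even part in z: integrated against the law of \<open>\<surd>X\<close> it gives the k-th
  derivative (up to \<open>\<i>^k\<close>) of the characteristic function of the symmetrisation.\<close>
definition even_twisted_power :: "nat \<Rightarrow> real \<Rightarrow> real \<Rightarrow> complex" where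
  "even_twisted_power k v z = (twisted_power k v z + twisted_power k v (-z)) / 2"

lemma twisted_power_taylor:
  "norm (twisted_power k (v+u) z - (\<Sum>j\<le>n. (\<i>*u)^j/fact j * twisted_power (k+j) v z))
     \<le> \<bar>u\<bar>^(Suc n) * \<bar>z\<bar>^(k+Suc n) / fact (Suc n)"
proof -
  define A where "A = complex_of_real z ^ k * iexp (v * z)"
  have "(\<i>*u)^j/fact j * twisted_power (k+j) v z = A * ((\<i>*complex_of_real (u * z))^j/fact j)"
    for j unfolding twisted_power_def A_def by (simp add: power_add power_mult_distrib mult_ac)
  then have sum_eq: "(\<Sum>j\<le>n. (\<i>*u)^j/fact j * twisted_power (k+j) v z)
      = A * (\<Sum>j\<le>n. (\<i>*complex_of_real (u * z))^j/fact j)"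
    by (simp add: sum_distrib_left)
  have shift: "twisted_power k (v+u) z = A * iexp (u * z)"
    unfolding twisted_power_def A_def by (simp add: exp_add[symmetric] algebra_simps)
  have "norm (twisted_power k (v+u) z - (\<Sum>j\<le>n. (\<i>*u)^j/fact j * twisted_power (k+j) v z))
     = norm A * norm (iexp (u * z) - (\<Sum>j\<le>n. (\<i>*complex_of_real (u * z))^j/fact j))"
    unfolding sum_eq shift by (simp add: right_diff_distrib[symmetric] norm_mult)
  also have "\<dots> \<le> \<bar>z\<bar>^k * (\<bar>u * z\<bar>^(Suc n)/fact (Suc n))"
    by (intro mult_mono iexp_approx1) (auto simp: A_def norm_mult norm_power)
  also have "\<dots> = \<bar>u\<bar>^(Suc n) * \<bar>z\<bar>^(k+Suc n) / fact (Suc n)"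
    by (simp add: abs_mult power_mult_distrib power_add)
  finally show ?thesis .
qed

lemma even_twisted_power_taylor:
  "norm (even_twisted_power k (v+u) z
         - (\<Sum>j\<le>n. (\<i>*u)^j/fact j * even_twisted_power (k+j) v z))
     \<le> \<bar>u\<bar>^(Suc n) * \<bar>z\<bar>^(k+Suc n) / fact (Suc n)"
proof -
  let ?R = "\<lambda>z. twisted_power k (v+u) z - (\<Sum>j\<le>n. (\<i>*u)^j/fact j * twisted_power (k+j) v z)"
  have "even_twisted_power k (v+u) z - (\<Sum>j\<le>n. (\<i>*u)^j/fact j * even_twisted_power (k+j) v z)
      = (?R z + ?R (-z)) / 2"
    unfolding even_twisted_power_def
    by (simp add: sum_divide_distrib sum.distrib algebra_simps add_divide_distrib diff_divide_distrib)
  also have "norm \<dots> \<le> (\<bar>u\<bar>^(Suc n) * \<bar>z\<bar>^(k+Suc n) / fact (Suc n)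
                       + \<bar>u\<bar>^(Suc n) * \<bar>-z\<bar>^(k+Suc n) / fact (Suc n)) / 2"
    unfolding norm_divide norm_numeral
    by (intro divide_right_mono order.trans[OF norm_triangle_ineq] add_mono twisted_power_taylor) auto
  also have "\<dots> = \<bar>u\<bar>^(Suc n) * \<bar>z\<bar>^(k+Suc n) / fact (Suc n)"
    unfolding abs_minus_cancel by (rule field_sum_of_halves[unfolded add_divide_distrib[symmetric]])
  finally show ?thesis .
qed

lemma norm_even_twisted_power_le: "norm (even_twisted_power k v z) \<le> \<bar>z\<bar>^k"
proof -
  have "norm (even_twisted_power k v z)
      \<le> (norm (twisted_power k v z) + norm (twisted_power k v (-z))) / 2"
    unfolding even_twisted_power_def norm_divide norm_numeral
    by (intro divide_right_mono norm_triangle_ineq) auto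
  also have "\<dots> = \<bar>z\<bar>^k"
    by (simp add: twisted_power_def norm_mult norm_power)
  finally show ?thesis .
qed

text \<open>At v = 0 the even kernel evaluated at \<open>\<surd>x\<close> is a power of x (or zero):
  this is where the moments of X enter.\<close>
lemma even_twisted_power_at_zero:
  assumes "x \<ge> 0"
  shows "even_twisted_power k 0 (sqrt x) = (if even k then complex_of_real (x ^ (k div 2)) else 0)"
proof (cases "even k")
  case True
  then obtain j where k: "k = 2 * j" by blast
  have "sqrt x ^ k = x ^ j" unfolding k power_mult using assms by simp
  then show ?thesis
    using True k by (simp add: even_twisted_power_def twisted_power_def power_minus_even
        flip: of_real_power)
next
  case False
  then show ?thesis
    by (simp add: even_twisted_power_def twisted_power_def power_minus_odd)
qed

section \<open>Random variables with an exponential moment of \<open>\<surd>X\<close>\<close>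

locale sqrt_exp_moment = prob_space M for M :: "'a measure" +
  fixes X :: "'a \<Rightarrow> real" and t :: real
  assumes X_measurable[measurable]: "X \<in> borel_measurable M"
    and X_nonneg: "\<And>\<omega>. \<omega> \<in> space M \<Longrightarrow> X \<omega> \<ge> 0"
    and t_pos: "t > 0"
    and integrable_exp: "integrable M (\<lambda>\<omega>. exp (t * sqrt (X \<omega>)))"
begin

definition exp_moment :: real where
  "exp_moment = (\<integral>\<omega>. exp (t * sqrt (X \<omega>)) \<partial>M)"

lemma exp_moment_nonneg: "exp_moment \<ge> 0"
  unfolding exp_moment_def by (intro integral_nonneg_AE) auto

lemma integrable_sqrt_power: "integrable M (\<lambda>\<omega>. sqrt (X \<omega>) ^ m)"
proof (rule Bochner_Integration.integrable_bound)
  show "integrable M (\<lambda>\<omega>. fact m / t^m * exp (t * sqrt (X \<omega>)))"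
    by (intro Bochner_Integration.integrable_mult_right integrable_exp)
  show "AE \<omega> in M. norm (sqrt (X \<omega>) ^ m) \<le> norm (fact m / t ^ m * exp (t * sqrt (X \<omega>)))"
    using X_nonneg t_pos power_le_exp_scaled[of "sqrt (X _)" t m] by (intro AE_I2) auto
qed measurable

lemma integrable_power: "integrable M (\<lambda>\<omega>. X \<omega> ^ m)"
proof -
  have "integrable M (\<lambda>\<omega>. sqrt (X \<omega>) ^ (2*m))" by (rule integrable_sqrt_power)
  then show ?thesis
    by (rule Bochner_Integration.integrable_cong[THEN iffD1, rotated -1])
      (auto simp: power_mult X_nonneg)
qed

lemma kernel_measurable[measurable]:
  "(\<lambda>\<omega>. even_twisted_power k v (sqrt (X \<omega>))) \<in> borel_measurable M"
  unfolding even_twisted_power_def twisted_power_def by measurable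

lemma integrable_kernel: "integrable M (\<lambda>\<omega>. even_twisted_power k v (sqrt (X \<omega>)))"
proof (rule Bochner_Integration.integrable_bound[OF integrable_sqrt_power[of k]])
  show "AE \<omega> in M. norm (even_twisted_power k v (sqrt (X \<omega>))) \<le> norm (sqrt (X \<omega>) ^ k)"
    using X_nonneg
    by (intro AE_I2) (auto intro: order.trans[OF norm_even_twisted_power_le] simp: norm_power)
qed measurable

lemma integral_kernel_at_zero:
  "(\<integral>\<omega>. even_twisted_power k 0 (sqrt (X \<omega>)) \<partial>M)
     = (if even k then complex_of_real (\<integral>\<omega>. X \<omega> ^ (k div 2) \<partial>M) else 0)"
  by (subst Bochner_Integration.integral_cong[OF refl even_twisted_power_at_zero[OF X_nonneg]])
    (auto simp del: of_real_power)

lemma integral_kernel_taylor: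
  assumes u: "\<bar>u\<bar> \<le> t/4"
  shows "norm ((\<integral>\<omega>. even_twisted_power k (v+u) (sqrt (X \<omega>)) \<partial>M)
           - (\<Sum>j\<le>n. (\<i>*u)^j/fact j * (\<integral>\<omega>. even_twisted_power (k+j) v (sqrt (X \<omega>)) \<partial>M)))
         \<le> fact k * (2/t)^k * (1/2)^(Suc n) * exp_moment"
proof -
  define C where "C = \<bar>u\<bar>^(Suc n) / fact (Suc n) * (fact (k + Suc n) / t^(k + Suc n))"
  define R where "R \<omega> = even_twisted_power k (v+u) (sqrt (X \<omega>))
      - (\<Sum>j\<le>n. (\<i>*u)^j/fact j * even_twisted_power (k+j) v (sqrt (X \<omega>)))" for \<omega>
  have R_int: "integrable M R"
    unfolding R_def by (intro Bochner_Integration.integrable_diff Bochner_Integration.integrable_sum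
        Bochner_Integration.integrable_mult_right integrable_kernel)
  have R_bound: "norm (R \<omega>) \<le> C * exp (t * sqrt (X \<omega>))" if \<omega>: "\<omega> \<in> space M" for \<omega>
  proof -
    have "norm (R \<omega>) \<le> \<bar>u\<bar>^(Suc n) * \<bar>sqrt (X \<omega>)\<bar>^(k+Suc n) / fact (Suc n)"
      unfolding R_def by (rule even_twisted_power_taylor)
    also have "\<dots> \<le> \<bar>u\<bar>^(Suc n) * (fact (k + Suc n) / t^(k + Suc n) * exp (t * sqrt (X \<omega>)))
                     / fact (Suc n)"
      using X_nonneg[OF \<omega>] t_pos power_le_exp_scaled[of "sqrt (X \<omega>)" t "k + Suc n"]
      by (intro divide_right_mono mult_left_mono) auto
    also have "\<dots> = C * exp (t * sqrt (X \<omega>))" unfolding C_def by (simp add: field_simps)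
    finally show ?thesis .
  qed
  have "(\<integral>\<omega>. even_twisted_power k (v+u) (sqrt (X \<omega>)) \<partial>M)
           - (\<Sum>j\<le>n. (\<i>*u)^j/fact j * (\<integral>\<omega>. even_twisted_power (k+j) v (sqrt (X \<omega>)) \<partial>M))
       = (\<integral>\<omega>. R \<omega> \<partial>M)"
    unfolding R_def
    by (subst Bochner_Integration.integral_diff Bochner_Integration.integral_sum
        Bochner_Integration.integral_mult_right_zero,
        auto intro!: integrable_kernel Bochner_Integration.integrable_sum
        Bochner_Integration.integrable_mult_right)+
  also have "norm \<dots> \<le> (\<integral>\<omega>. C * exp (t * sqrt (X \<omega>)) \<partial>M)"
    using R_int R_bound integrable_exp
    by (intro order.trans[OF Bochner_Integration.integral_norm_bound Bochner_Integration.integral_mono])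
      (auto intro: integrable_norm)
  also have "\<dots> = C * exp_moment" unfolding exp_moment_def by simp
  also have "\<dots> \<le> fact k * (2/t)^k * (1/2)^(Suc n) * exp_moment"
    unfolding C_def by (intro mult_right_mono taylor_coefficient_bound t_pos u exp_moment_nonneg)
  finally show ?thesis .
qed

end

section \<open>Uniqueness for equal moments\<close>

text \<open>Difference of the kernel integrals of two random variables; for k = 0 it is the
  difference of the characteristic functions of their square-root symmetrisations.\<close>
definition kernel_gap ::
    "'a measure \<Rightarrow> ('a \<Rightarrow> real) \<Rightarrow> 'b measure \<Rightarrow> ('b \<Rightarrow> real) \<Rightarrow> nat \<Rightarrow> real \<Rightarrow> complex" where
  "kernel_gap M X N Y k v = (\<integral>\<omega>. even_twisted_power k v (sqrt (X \<omega>)) \<partial>M)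
                          - (\<integral>\<omega>. even_twisted_power k v (sqrt (Y \<omega>)) \<partial>N)"

text \<open>If all kernel gaps vanish at v, they vanish at every point within distance t/4:
  the Taylor polynomials agree and both remainders are \<open>O(2^-n)\<close>.\<close>
lemma kernel_gap_local_step:
  assumes XX: "sqrt_exp_moment M X t" and YY: "sqrt_exp_moment N Y t"
    and gap: "\<And>k. kernel_gap M X N Y k v = 0" and u: "\<bar>u\<bar> \<le> t/4"
  shows "kernel_gap M X N Y k (v+u) = 0"
proof -
  interpret X: sqrt_exp_moment M X t by (rule XX)
  interpret Y: sqrt_exp_moment N Y t by (rule YY)
  define K where "K = fact k * (2/t)^k * (X.exp_moment + Y.exp_moment)"
  have "norm (kernel_gap M X N Y k (v+u)) \<le> K * (1/2)^Suc n" for n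
  proof -
    let ?T = "\<lambda>M X. (\<Sum>j\<le>n. (\<i>*u)^j/fact j * (\<integral>\<omega>. even_twisted_power (k+j) v (sqrt (X \<omega>)) \<partial>M))"
    let ?A = "\<lambda>M X. (\<integral>\<omega>. even_twisted_power k (v+u) (sqrt (X \<omega>)) \<partial>M)"
    have "?T M X - ?T N Y = (\<Sum>j\<le>n. (\<i>*u)^j/fact j * kernel_gap M X N Y (k+j) v)"
      unfolding kernel_gap_def by (simp add: sum_subtractf right_diff_distrib)
    then have "kernel_gap M X N Y k (v+u) = (?A M X - ?T M X) - (?A N Y - ?T N Y)"
      using gap unfolding kernel_gap_def by (simp add: algebra_simps)
    then have "norm (kernel_gap M X N Y k (v+u)) \<le> norm (?A M X - ?T M X) + norm (?A N Y - ?T N Y)"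
      by (simp add: norm_triangle_ineq4)
    also have "\<dots> \<le> fact k * (2/t)^k * (1/2)^(Suc n) * X.exp_moment
                  + fact k * (2/t)^k * (1/2)^(Suc n) * Y.exp_moment"
      by (intro add_mono X.integral_kernel_taylor Y.integral_kernel_taylor u)
    also have "\<dots> = K * (1/2)^Suc n" unfolding K_def by (simp add: algebra_simps)
    finally show ?thesis .
  qed
  then have "norm (kernel_gap M X N Y k (v+u)) \<le> 0" by (rule le_zero_by_geometric)
  then show ?thesis by simp
qed

lemma kernel_gap_vanishes:
  assumes XX: "sqrt_exp_moment M X t" and YY: "sqrt_exp_moment N Y t"
    and moments: "\<And>k. (\<integral>\<omega>. Y \<omega> ^ k \<partial>N) = (\<integral>\<omega>. X \<omega> ^ k \<partial>M)"
  shows "kernel_gap M X N Y k v = 0"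
proof -
  interpret X: sqrt_exp_moment M X t by (rule XX)
  interpret Y: sqrt_exp_moment N Y t by (rule YY)
  have "\<forall>k. kernel_gap M X N Y k v = 0"
  proof (rule real_line_propagation[where s="t/4"])
    show "t/4 > 0" using X.t_pos by simp
    show "\<forall>k. kernel_gap M X N Y k 0 = 0"
      unfolding kernel_gap_def X.integral_kernel_at_zero Y.integral_kernel_at_zero moments by simp
  qed (use kernel_gap_local_step[OF XX YY] in blast)
  then show ?thesis by blast
qed

lemma same_law_of_same_moments:
  assumes XX: "sqrt_exp_moment M X t" and YY: "sqrt_exp_moment N Y t"
    and moments: "\<And>k. (\<integral>\<omega>. Y \<omega> ^ k \<partial>N) = (\<integral>\<omega>. X \<omega> ^ k \<partial>M)"
  shows "distr N borel Y = distr M borel X"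
proof -
  interpret X: sqrt_exp_moment M X t by (rule XX)
  interpret Y: sqrt_exp_moment N Y t by (rule YY)
  note symX = sqrt_symmetrisation_props[OF X.prob_space_axioms X.X_measurable]
  note symY = sqrt_symmetrisation_props[OF Y.prob_space_axioms Y.X_measurable]
  have "char (sqrt_symmetrisation M X) v - char (sqrt_symmetrisation N Y) v
      = kernel_gap M X N Y 0 v" for v
    using X.X_nonneg Y.X_nonneg
    by (simp add: symX(2) symY(2) kernel_gap_def even_twisted_power_def twisted_power_def)
  then have "char (sqrt_symmetrisation M X) = char (sqrt_symmetrisation N Y)"
    using kernel_gap_vanishes[OF XX YY moments] by (auto simp: fun_eq_iff)
  then have "sqrt_symmetrisation M X = sqrt_symmetrisation N Y"
    using X.X_nonneg Y.X_nonneg by (intro Levy_uniqueness symX(1) symY(1)) auto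
  then show ?thesis using X.X_nonneg Y.X_nonneg symX(3) symY(3) by simp
qed

section \<open>The exponential moment is determined by the moments\<close>

text \<open>\<open>E cosh (t \<surd>Z)\<close> expands into a series in the moments of Z, since the
  power series of \<open>cosh (t \<surd>z)\<close> only contains integer powers of z.\<close>
lemma nn_integral_cosh_sqrt_moments:
  fixes Z :: "'b \<Rightarrow> real"
  assumes [measurable]: "Z \<in> borel_measurable N"
    and Z_nonneg: "\<And>\<omega>. \<omega> \<in> space N \<Longrightarrow> Z \<omega> \<ge> 0"
    and Z_int: "\<And>k. integrable N (\<lambda>\<omega>. Z \<omega> ^ k)" and t: "t \<ge> 0"
  shows "(\<integral>\<^sup>+\<omega>. ennreal (cosh (t * sqrt (Z \<omega>))) \<partial>N)
       = (\<Sum>n. ennreal (if even n then t^n / fact n * (\<integral>\<omega>. Z \<omega> ^ (n div 2) \<partial>N) else 0))"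
proof -
  define a where "a n z = (if even n then t^n / fact n * z ^ (n div 2) else 0)" for n and z :: real
  have a_nonneg: "z \<ge> 0 \<Longrightarrow> a n z \<ge> 0" for n z unfolding a_def using t by auto
  have cosh_series: "ennreal (cosh (t * sqrt z)) = (\<Sum>n. ennreal (a n z))" if z: "z \<ge> 0" for z
  proof -
    have "a n z = (if even n then (t * sqrt z) ^ n /\<^sub>R fact n else 0)" for n
    proof (cases "even n")
      case True
      then obtain j where n: "n = 2*j" by blast
      have "sqrt z ^ n = z ^ j" unfolding n power_mult using z by simp
      then show ?thesis
        using True n unfolding a_def by (simp add: power_mult_distrib divide_inverse mult_ac)
    qed (simp add: a_def)
    then have "(\<lambda>n. a n z) sums cosh (t * sqrt z)" using cosh_converges[of "t * sqrt z"] by simp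
    then show ?thesis by (intro suminf_ennreal_eq[symmetric] a_nonneg z)
  qed
  have term_integral: "(\<integral>\<^sup>+\<omega>. ennreal (a n (Z \<omega>)) \<partial>N)
      = ennreal (if even n then t^n / fact n * (\<integral>\<omega>. Z \<omega> ^ (n div 2) \<partial>N) else 0)" for n
  proof -
    have "integrable N (\<lambda>\<omega>. a n (Z \<omega>))"
      by (cases "even n") (auto simp: a_def intro!: Z_int Bochner_Integration.integrable_mult_right)
    then have "(\<integral>\<^sup>+\<omega>. ennreal (a n (Z \<omega>)) \<partial>N) = ennreal (\<integral>\<omega>. a n (Z \<omega>) \<partial>N)"
      by (intro nn_integral_eq_integral AE_I2 a_nonneg Z_nonneg)
    also have "(\<integral>\<omega>. a n (Z \<omega>) \<partial>N) = (if even n then t^n / fact n * (\<integral>\<omega>. Z \<omega> ^ (n div 2) \<partial>N) else 0)"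
      by (simp add: a_def)
    finally show ?thesis .
  qed
  have "(\<integral>\<^sup>+\<omega>. ennreal (cosh (t * sqrt (Z \<omega>))) \<partial>N) = (\<integral>\<^sup>+\<omega>. (\<Sum>n. ennreal (a n (Z \<omega>))) \<partial>N)"
    by (intro nn_integral_cong cosh_series Z_nonneg)
  also have "\<dots> = (\<Sum>n. (\<integral>\<^sup>+\<omega>. ennreal (a n (Z \<omega>)) \<partial>N))"
    by (intro nn_integral_suminf) (simp add: a_def)
  also have "\<dots> = (\<Sum>n. ennreal (if even n then t^n / fact n * (\<integral>\<omega>. Z \<omega> ^ (n div 2) \<partial>N) else 0))"
    unfolding term_integral ..
  finally show ?thesis .
qed

lemma nn_integral_cosh_sqrt_eq:
  fixes Y :: "'b \<Rightarrow> real" and X :: "'a \<Rightarrow> real"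
  assumes [measurable]: "Y \<in> borel_measurable N" "X \<in> borel_measurable M"
    and "\<And>\<omega>. \<omega> \<in> space N \<Longrightarrow> Y \<omega> \<ge> 0" "\<And>\<omega>. \<omega> \<in> space M \<Longrightarrow> X \<omega> \<ge> 0"
    and "\<And>k. integrable N (\<lambda>\<omega>. Y \<omega> ^ k)" "\<And>k. integrable M (\<lambda>\<omega>. X \<omega> ^ k)"
    and moments: "\<And>k. (\<integral>\<omega>. Y \<omega> ^ k \<partial>N) = (\<integral>\<omega>. X \<omega> ^ k \<partial>M)" and "t \<ge> 0"
  shows "(\<integral>\<^sup>+\<omega>. ennreal (cosh (t * sqrt (Y \<omega>))) \<partial>N)
       = (\<integral>\<^sup>+\<omega>. ennreal (cosh (t * sqrt (X \<omega>))) \<partial>M)"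
proof -
  have "(\<integral>\<^sup>+\<omega>. ennreal (cosh (t * sqrt (Y \<omega>))) \<partial>N)
      = (\<Sum>n. ennreal (if even n then t^n / fact n * (\<integral>\<omega>. Y \<omega> ^ (n div 2) \<partial>N) else 0))"
    by (rule nn_integral_cosh_sqrt_moments) (use assms in auto)
  also have "\<dots> = (\<Sum>n. ennreal (if even n then t^n / fact n * (\<integral>\<omega>. X \<omega> ^ (n div 2) \<partial>M) else 0))"
    by (simp only: moments)
  also have "\<dots> = (\<integral>\<^sup>+\<omega>. ennreal (cosh (t * sqrt (X \<omega>))) \<partial>M)"
    by (rule nn_integral_cosh_sqrt_moments[symmetric]) (use assms in auto)
  finally show ?thesis .
qed

text \<open>A non-negative Y with the same (finite) moments as X inherits the exponential moment:
  \<open>E exp (t\<surd>Y) \<le> 2 E cosh (t\<surd>Y) = 2 E cosh (t\<surd>X) \<le> 2 E exp (t\<surd>X)\<close>.\<close>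
lemma sqrt_exp_moment_transfer:
  assumes XX: "sqrt_exp_moment M X t" and N: "prob_space N"
    and [measurable]: "Y \<in> borel_measurable N" and Y_nonneg: "\<And>\<omega>. \<omega> \<in> space N \<Longrightarrow> Y \<omega> \<ge> 0"
    and Y_int: "\<And>k. integrable N (\<lambda>\<omega>. Y \<omega> ^ k)"
    and moments: "\<And>k. (\<integral>\<omega>. Y \<omega> ^ k \<partial>N) = (\<integral>\<omega>. X \<omega> ^ k \<partial>M)"
  shows "sqrt_exp_moment N Y t"
proof -
  interpret X: sqrt_exp_moment M X t by (rule XX)
  have t: "t \<ge> 0" using X.t_pos by simp
  have "(\<integral>\<^sup>+\<omega>. ennreal (norm (exp (t * sqrt (Y \<omega>)))) \<partial>N)
      \<le> (\<integral>\<^sup>+\<omega>. 2 * ennreal (cosh (t * sqrt (Y \<omega>))) \<partial>N)"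
  proof (intro nn_integral_mono)
    fix \<omega>
    have "exp (t * sqrt (Y \<omega>)) \<le> 2 * cosh (t * sqrt (Y \<omega>))" unfolding cosh_def by simp
    from ennreal_leI[OF this]
    show "ennreal (norm (exp (t * sqrt (Y \<omega>)))) \<le> 2 * ennreal (cosh (t * sqrt (Y \<omega>)))"
      by (simp add: ennreal_mult)
  qed
  also have "\<dots> = 2 * (\<integral>\<^sup>+\<omega>. ennreal (cosh (t * sqrt (Y \<omega>))) \<partial>N)"
    by (rule nn_integral_cmult) (unfold cosh_def, measurable)
  also have "(\<integral>\<^sup>+\<omega>. ennreal (cosh (t * sqrt (Y \<omega>))) \<partial>N)
      = (\<integral>\<^sup>+\<omega>. ennreal (cosh (t * sqrt (X \<omega>))) \<partial>M)"
    using Y_nonneg Y_int X.X_nonneg X.integrable_power t moments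
    by (intro nn_integral_cosh_sqrt_eq) auto
  also have "\<dots> \<le> (\<integral>\<^sup>+\<omega>. ennreal (exp (t * sqrt (X \<omega>))) \<partial>M)"
    using X.X_nonneg t by (intro nn_integral_mono ennreal_leI) (simp add: cosh_def)
  also have "\<dots> = ennreal X.exp_moment"
    unfolding X.exp_moment_def by (intro nn_integral_eq_integral X.integrable_exp) auto
  finally have "(\<integral>\<^sup>+\<omega>. ennreal (norm (exp (t * sqrt (Y \<omega>)))) \<partial>N) \<le> 2 * ennreal X.exp_moment"
    by (simp add: mult_left_mono)
  then have "(\<integral>\<^sup>+\<omega>. ennreal (norm (exp (t * sqrt (Y \<omega>)))) \<partial>N) < \<infinity>"
    by (rule order.strict_trans1) (simp add: ennreal_mult_less_top)
  then have "integrable N (\<lambda>\<omega>. exp (t * sqrt (Y \<omega>)))"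
    by (intro integrableI_bounded) auto
  then show ?thesis
    using N X.t_pos Y_nonneg by (intro sqrt_exp_moment.intro sqrt_exp_moment_axioms.intro) auto
qed

text \<open>Hence an exponential moment of \<open>\<surd>X\<close> makes X determined by its moments.
  The competitor Y is only a.e. non-negative, so it is replaced by \<open>max 0 Y\<close>.\<close>
lemma moment_determinate_of_sqrt_exp_moment:
  assumes XX: "sqrt_exp_moment M X t"
  shows "moment_determinate M X"
  unfolding moment_determinate_def
proof (intro conjI allI impI)
  interpret X: sqrt_exp_moment M X t by (rule XX)
  show "integrable M (\<lambda>\<omega>. X \<omega> ^ k)" for k by (rule X.integrable_power)
  fix N :: "real measure" and Y :: "real \<Rightarrow> real"
  assume N: "prob_space N" and [measurable]: "Y \<in> borel_measurable N"
    and Y_nonneg: "AE \<omega> in N. Y \<omega> \<ge> 0"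
    and moments: "\<forall>k. integrable N (\<lambda>\<omega>. Y \<omega> ^ k) \<and> (\<integral>\<omega>. Y \<omega> ^ k \<partial>N) = (\<integral>\<omega>. X \<omega> ^ k \<partial>M)"
  define Y' where "Y' \<omega> = max 0 (Y \<omega>)" for \<omega>
  have [measurable]: "Y' \<in> borel_measurable N" unfolding Y'_def by measurable
  have ae: "AE \<omega> in N. Y \<omega> = Y' \<omega>" using Y_nonneg by eventually_elim (simp add: Y'_def)
  then have ae_power: "AE \<omega> in N. Y \<omega> ^ k = Y' \<omega> ^ k" for k by eventually_elim simp
  have Y'_int: "integrable N (\<lambda>\<omega>. Y' \<omega> ^ k)" for k
    using moments integrable_cong_AE[OF _ _ ae_power[of k]] by auto
  have Y'_moments: "(\<integral>\<omega>. Y' \<omega> ^ k \<partial>N) = (\<integral>\<omega>. X \<omega> ^ k \<partial>M)" for k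
    using moments integral_cong_AE[OF _ _ ae_power[of k]] by auto
  have "sqrt_exp_moment N Y' t"
    by (rule sqrt_exp_moment_transfer[OF XX N _ _ Y'_int Y'_moments]) (auto simp: Y'_def)
  then have "distr N borel Y' = distr M borel X"
    by (rule same_law_of_same_moments[OF XX _ Y'_moments])
  moreover have "distr N borel Y = distr N borel Y'"
    by (rule distr_cong_AE[OF refl refl ae]) auto
  ultimately show "distr N borel Y = distr M borel X" by simp
qed

section \<open>From tail bounds to the exponential moment\<close>

lemma summable_exp_neg_sqrt:
  assumes t: "(t::real) > 0"
  shows "summable (\<lambda>n. exp (- t * sqrt (real n)))"
proof (rule summable_comparison_test'[of "\<lambda>n. (24 / t^4) * inverse (real n ^ 2)" 1])
  show "summable (\<lambda>n. (24 / t^4) * inverse (real n ^ 2))"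
    by (intro summable_mult inverse_power_summable) auto
  fix n :: nat assume n: "n \<ge> 1"
  have "(t * sqrt (real n))^4 / fact 4 \<le> exp (t * sqrt (real n))"
    using t by (intro power_div_fact_le_exp) auto
  moreover have "(t * sqrt (real n))^4 = t^4 * real n ^ 2"
  proof -
    have "sqrt (real n)^4 = (sqrt (real n)^2)^2" by (simp add: eval_nat_numeral mult_ac)
    then show ?thesis by (simp add: power_mult_distrib)
  qed
  moreover have "(fact 4 :: real) = 24" by (simp add: fact_numeral)
  ultimately have "t^4 * real n ^ 2 / 24 \<le> exp (t * sqrt (real n))" by simp
  moreover have "t^4 * real n ^ 2 > 0" using t n by simp
  ultimately show "norm (exp (- t * sqrt (real n))) \<le> (24 / t^4) * inverse (real n ^ 2)"
    by (simp add: exp_minus field_simps)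
qed

lemma summable_exp_sqrt_weighted:
  assumes c: "c > 0" and p_nonneg: "\<And>n. p n \<ge> 0"
    and tail: "\<And>n. n \<ge> m \<Longrightarrow> p n \<le> exp (- c * sqrt (real n))"
  shows "summable (\<lambda>n. exp (c/2 * sqrt (real n + 1)) * p n)"
proof (rule summable_comparison_test'[of "\<lambda>n. exp (c/2) * exp (- (c/2) * sqrt (real n))" m])
  show "summable (\<lambda>n. exp (c/2) * exp (- (c/2) * sqrt (real n)))"
    using c by (intro summable_mult summable_exp_neg_sqrt) auto
  fix n assume n: "n \<ge> m"
  have "real n + 1 \<le> (sqrt (real n) + 1)^2"
    by (simp add: power2_eq_square algebra_simps)
  then have "sqrt (real n + 1) \<le> sqrt (real n) + 1"
    using real_sqrt_le_mono by fastforce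
  then have "c * sqrt (real n + 1) \<le> c * (sqrt (real n) + 1)"
    using c by (intro mult_left_mono) auto
  then have exponent: "c/2 * sqrt (real n + 1) - c * sqrt (real n) \<le> c/2 + - (c/2) * sqrt (real n)"
    by (simp add: algebra_simps)
  have "exp (c/2 * sqrt (real n + 1)) * p n \<le> exp (c/2 * sqrt (real n + 1)) * exp (- c * sqrt (real n))"
    by (intro mult_left_mono tail n) auto
  also have "\<dots> = exp (c/2 * sqrt (real n + 1) - c * sqrt (real n))"
    by (simp add: exp_add[symmetric])
  also have "\<dots> \<le> exp (c/2) * exp (- (c/2) * sqrt (real n))"
    using exponent by (simp add: exp_add[symmetric])
  finally show "norm (exp (c/2 * sqrt (real n + 1)) * p n) \<le> exp (c/2) * exp (- (c/2) * sqrt (real n))"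
    using p_nonneg by simp
qed

lemma exp_sqrt_le_layer_series:
  assumes x: "(x::real) \<ge> 0" and t: "t \<ge> 0"
  shows "ennreal (exp (t * sqrt x))
      \<le> 1 + (\<Sum>n. ennreal (exp (t * sqrt (real n + 1))) * indicator {real n<..} x)"
proof (cases "x > 0")
  case False
  then show ?thesis using x by simp
next
  case True
  let ?f = "\<lambda>n. ennreal (exp (t * sqrt (real n + 1))) * indicator {real n<..} x"
  define m where "m = nat (\<lceil>x\<rceil> - 1)"
  have m1: "real m < x" and m2: "x \<le> real m + 1"
    using True unfolding m_def by linarith+
  have "ennreal (exp (t * sqrt x)) \<le> ennreal (exp (t * sqrt (real m + 1)))"
    using m2 t x by (intro ennreal_leI) (auto intro: mult_left_mono)
  also have "\<dots> = ?f m" using m1 by simp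
  also have "\<dots> = sum ?f {m}" by (subst sum.insert) simp_all
  also have "\<dots> \<le> suminf ?f" by (rule sum_le_suminf[OF summableI]) auto
  also have "\<dots> \<le> 1 + suminf ?f" by simp
  finally show ?thesis .
qed

lemma sqrt_exp_moment_of_tail_bound:
  assumes M: "prob_space M" and [measurable]: "X \<in> borel_measurable M"
    and X_nonneg: "\<And>\<omega>. \<omega> \<in> space M \<Longrightarrow> X \<omega> \<ge> 0" and c: "c > 0"
    and tail: "eventually (\<lambda>x. measure M {\<omega>\<in>space M. X \<omega> > x} \<le> exp (- c * sqrt x)) at_top"
  shows "sqrt_exp_moment M X (c/2)"
proof -
  interpret prob_space M by (rule M)
  define t where "t = c/2"
  have t: "t > 0" using c by (simp add: t_def)
  define p where "p n = measure M {\<omega>\<in>space M. X \<omega> > real n}" for n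
  obtain x0 where x0: "\<And>x. x \<ge> x0 \<Longrightarrow> measure M {\<omega>\<in>space M. X \<omega> > x} \<le> exp (- c * sqrt x)"
    using tail unfolding eventually_at_top_linorder by blast
  have "summable (\<lambda>n. exp (t * sqrt (real n + 1)) * p n)"
    unfolding t_def using c
    by (rule summable_exp_sqrt_weighted[where m="nat \<lceil>x0\<rceil>"]) (use x0 in \<open>auto simp: p_def\<close>)
  then have series_finite: "(\<Sum>n. ennreal (exp (t * sqrt (real n + 1)) * p n)) \<noteq> top"
    by (rule ennreal_suminf_neq_top) (simp add: p_def)
  have layer: "(\<integral>\<^sup>+\<omega>. ennreal (exp (t * sqrt (real n + 1))) * indicator {real n<..} (X \<omega>) \<partial>M)
      = ennreal (exp (t * sqrt (real n + 1)) * p n)" for n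
  proof -
    have "(\<integral>\<^sup>+\<omega>. ennreal (exp (t * sqrt (real n + 1))) * indicator {real n<..} (X \<omega>) \<partial>M)
        = (\<integral>\<^sup>+\<omega>. ennreal (exp (t * sqrt (real n + 1))) * indicator {\<omega>\<in>space M. X \<omega> > real n} \<omega> \<partial>M)"
      by (intro nn_integral_cong) (simp split: split_indicator)
    then show ?thesis
      by (simp add: nn_integral_cmult_indicator emeasure_eq_measure p_def ennreal_mult)
  qed
  have "(\<integral>\<^sup>+\<omega>. ennreal (norm (exp (t * sqrt (X \<omega>)))) \<partial>M)
      \<le> (\<integral>\<^sup>+\<omega>. 1 + (\<Sum>n. ennreal (exp (t * sqrt (real n + 1))) * indicator {real n<..} (X \<omega>)) \<partial>M)"
    using X_nonneg t by (intro nn_integral_mono) (simp add: exp_sqrt_le_layer_series)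
  also have "\<dots> = 1 + (\<Sum>n. ennreal (exp (t * sqrt (real n + 1)) * p n))"
    by (subst nn_integral_add) (auto simp: nn_integral_suminf emeasure_space_1 layer)
  also have "\<dots> < \<infinity>"
    using series_finite by (simp add: top.not_eq_extremum)
  finally have "integrable M (\<lambda>\<omega>. exp (t * sqrt (X \<omega>)))"
    by (intro integrableI_bounded) auto
  then show ?thesis
    unfolding t_def using M X_nonneg c
    by (intro sqrt_exp_moment.intro sqrt_exp_moment_axioms.intro) auto
qed

section \<open>The square-root growth condition\<close>

lemma tail_bound_of_liminf_sqrt:
  assumes L: "Liminf at_top (\<lambda>x. tail_R M X x / ereal (sqrt x)) > 0"
  shows "\<exists>c>0. eventually (\<lambda>x. measure M {\<omega>\<in>space M. X \<omega> > x} \<le> exp (- c * sqrt x)) at_top"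
proof -
  obtain c where c0: "0 < ereal c" and cL: "ereal c < Liminf at_top (\<lambda>x. tail_R M X x / ereal (sqrt x))"
    using ereal_dense2[OF L] by blast
  have c: "c > 0" using c0 by simp
  have ev: "eventually (\<lambda>x. tail_R M X x / ereal (sqrt x) > ereal c) at_top"
    by (rule less_LiminfD[OF cL])
  have "eventually (\<lambda>x. measure M {\<omega>\<in>space M. X \<omega> > x} \<le> exp (- c * sqrt x)) at_top"
    using ev eventually_gt_at_top[of 0]
  proof eventually_elim
    case (elim x)
    define p where "p = measure M {\<omega>\<in>space M. X \<omega> > x}"
    have sx: "sqrt x > 0" using elim by simp
    show ?case
    proof (cases "p = 0")
      case True then show ?thesis unfolding p_def by simp
    next
      case False
      have "p \<ge> 0" unfolding p_def by (rule measure_nonneg)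
      with False have p: "p > 0" by simp
      have "tail_R M X x = ereal (- ln p)" unfolding tail_R_def p_def[symmetric] using False by simp
      with elim sx have "- ln p / sqrt x > c" by simp
      then have "- ln p > c * sqrt x" using sx by (simp add: field_simps)
      then have "ln p < - c * sqrt x" by simp
      then have "p < exp (- c * sqrt x)" using p by (metis exp_less_cancel_iff exp_ln)
      then show ?thesis unfolding p_def by simp
    qed
  qed
  then show ?thesis using c by blast
qed

text \<open>If a natural scale h grows at least like \<open>\<surd>x\<close>, so does R_X, since
  \<open>R_X(x) > h(x)/2\<close> for large x.\<close>
lemma liminf_sqrt_of_natural_scale:
  assumes ns: "natural_scale M X h" and hL: "Liminf at_top (\<lambda>x. ereal (h x / sqrt x)) > 0"
  shows "Liminf at_top (\<lambda>x. tail_R M X x / ereal (sqrt x)) > 0"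
proof -
  obtain d where d0: "0 < ereal d" and dL: "ereal d < Liminf at_top (\<lambda>x. ereal (h x / sqrt x))"
    using ereal_dense2[OF hL] by blast
  have d: "d > 0" using d0 by simp
  have e1: "eventually (\<lambda>x. ereal (h x / sqrt x) > ereal d) at_top" by (rule less_LiminfD[OF dL])
  have "ereal (1/2) < Liminf at_top (\<lambda>x. tail_R M X x / ereal (h x))"
    using ns unfolding natural_scale_def by simp
  then have e2: "eventually (\<lambda>x. tail_R M X x / ereal (h x) > ereal (1/2)) at_top" by (rule less_LiminfD)
  have "filterlim h at_top at_top" using ns unfolding natural_scale_def by simp
  then have e3: "eventually (\<lambda>x. h x > 0) at_top" by (rule filterlim_at_top_dense[THEN iffD1, rule_format])
  have "eventually (\<lambda>x. ereal (d/2) \<le> tail_R M X x / ereal (sqrt x)) at_top"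
    using e1 e2 e3 eventually_gt_at_top[of 0]
  proof eventually_elim
    case (elim x)
    have sx: "sqrt x > 0" using elim by simp
    have hd: "h x > d * sqrt x" using elim sx by (simp add: field_simps)
    show ?case
    proof (cases "tail_R M X x = \<infinity>")
      case True then show ?thesis using sx by simp
    next
      case False
      then obtain r where r: "tail_R M X x = ereal r" unfolding tail_R_def Let_def by (auto split: if_splits)
      have "r / h x > 1/2" using elim r by simp
      then have "r > h x / 2" using elim by (simp add: field_simps)
      then have "r > d * sqrt x / 2" using hd by simp
      then have "r / sqrt x > d / 2" using sx by (simp add: field_simps)
      then show ?thesis using r sx by simp
    qed
  qed
  then have "ereal (d/2) \<le> Liminf at_top (\<lambda>x. tail_R M X x / ereal (sqrt x))" by (rule Liminf_bounded)
  moreover have "0 < ereal (d/2)" using d by simp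
  ultimately show ?thesis by (rule order.strict_trans2[rotated])
qed

lemma moment_determinate_of_liminf_sqrt:
  assumes "prob_space M" and "X \<in> borel_measurable M" and "\<forall>\<omega>\<in>space M. X \<omega> \<ge> 0"
    and "Liminf at_top (\<lambda>x. tail_R M X x / ereal (sqrt x)) > 0"
  shows "moment_determinate M X"
proof -
  obtain c where "c > 0"
    and "eventually (\<lambda>x. measure M {\<omega>\<in>space M. X \<omega> > x} \<le> exp (- c * sqrt x)) at_top"
    using tail_bound_of_liminf_sqrt[OF assms(4)] by blast
  then have "sqrt_exp_moment M X (c/2)"
    using assms(1-3) by (intro sqrt_exp_moment_of_tail_bound) auto
  then show ?thesis by (rule moment_determinate_of_sqrt_exp_moment)
qed

text \<open>Main result.\<close>
theorem lemma2p10: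
  fixes M :: "'a measure" and X :: "'a \<Rightarrow> real"
  assumes "prob_space M"
    and "X \<in> borel_measurable M"
    and "\<forall>\<omega>\<in>space M. X \<omega> \<ge> 0"
  shows "(Liminf at_top (\<lambda>x. tail_R M X x / ereal (sqrt x)) > 0
            \<longrightarrow> moment_determinate M X)
       \<and> ((heavy_tailed M X \<and>
            (\<exists>h. natural_scale M X h \<and> Liminf at_top (\<lambda>x. ereal (h x / sqrt x)) > 0))
            \<longrightarrow> Liminf at_top (\<lambda>x. tail_R M X x / ereal (sqrt x)) > 0
                \<and> moment_determinate M X)"
  using moment_determinate_of_liminf_sqrt[OF assms] liminf_sqrt_of_natural_scale by blast

end
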